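(* Let $n\in\mathbb{N}$ and $f\colon\{-1,1\}^n\to[-1,1]$ with $f(1,\dots,1)=1$ and $f(-1,\dots,-1)=-1$. Let $\rho$ be the distribution of $p=\frac{e^t-1}{e^t+1}$ where $t$ is uniform on $[-\ln(5n),\ln(5n)]$. Then $$\mathbb{E}_{p\sim\rho,\ x_{1\ldots n}\sim p}\left[f(x)\cdot\sum_{i=1}^n(x_i-p)\right]\ge\frac{1}{\ln(5n)}.$$
   Context: For $p\in[-1,1]$, $x_{1\ldots n}\sim p$ means $x=(x_1,\dots,x_n)$ where the $x_i\in\{-1,1\}$ are independent with $\mathbb{E}[x_i]=p$, i.e. $\Pr[x_i=1]=\frac{1+p}{2}$. *)

theory Defs
  imports "HOL-Probability.Probability"
begin

definition cube :: "nat \<Rightarrow> int list set" where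
  "cube n = {xs. length xs = n \<and> set xs \<subseteq> {-1, 1}}"

text \<open>Probability of x under x_{1..n} ~ p: independent coordinates with
  Pr[x_i = 1] = (1+p)/2, Pr[x_i = -1] = (1-p)/2, i.e. Pr[x_i] = (1 + p x_i)/2.\<close>
definition bias_prob :: "real \<Rightarrow> int list \<Rightarrow> real" where
  "bias_prob p xs = (\<Prod>xi\<leftarrow>xs. (1 + p * real_of_int xi) / 2)"

definition inner_exp :: "nat \<Rightarrow> (int list \<Rightarrow> real) \<Rightarrow> real \<Rightarrow> real" where
  "inner_exp n f p = (\<Sum>xs\<in>cube n. bias_prob p xs * (f xs * (\<Sum>xi\<leftarrow>xs. real_of_int xi - p)))"

definition rho :: "nat \<Rightarrow> real measure" where
  "rho n = distr (uniform_measure lborel {- ln (5 * real n) .. ln (5 * real n)}) borel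
              (\<lambda>t. (exp t - 1) / (exp t + 1))"

end

theory Submission
  imports Defs
begin

text \<open>Put \<open>p = tanh (t/2)\<close>, so that \<open>dp/dt = (1 - p\<^sup>2)/2\<close>, and let \<open>\<mu>(p)\<close> be the mean of \<open>f\<close>
  under \<open>x ~ p\<close> (\<open>bias_mean\<close>). Differentiating the product density gives
  \<open>\<mu>'(p) = inner_exp n f p / (1 - p\<^sup>2)\<close>,
  so the integrand is \<open>2 d\<mu>(tanh (t/2))/dt\<close> and the expectation over \<open>\<rho>\<close> telescopes to
  \<open>(\<mu>(q) - \<mu>(-q)) / L\<close> with \<open>L = ln (5n)\<close> and \<open>q = tanh (L/2) = (5n - 1)/(5n + 1)\<close>.
  Under bias \<open>q\<close> the all-ones point has mass \<open>(1 - 1/(5n + 1))\<^sup>n \<ge> 4/5\<close> by Bernoulli's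
  inequality, and \<open>f \<ge> -1\<close> elsewhere, so \<open>\<mu>(q) \<ge> 3/5\<close>; symmetrically \<open>\<mu>(-q) \<le> -3/5\<close>.\<close>

lemma finite_cube: "finite (cube n)"
  using finite_lists_length_eq[of "{-1, 1 :: int}" n] by (simp add: cube_def conj_commute)

lemma cube_0: "cube 0 = {[]}"
  by (auto simp: cube_def)

lemma cube_Suc: "cube (Suc n) = (\<lambda>(x, xs). x # xs) ` ({-1, 1} \<times> cube n)"
proof
  show "cube (Suc n) \<subseteq> (\<lambda>(x, xs). x # xs) ` ({-1, 1} \<times> cube n)"
  proof
    fix ys assume "ys \<in> cube (Suc n)"
    then obtain x xs where "ys = x # xs" "x \<in> {-1, 1}" "xs \<in> cube n"
      unfolding cube_def by (cases ys) auto
    then show "ys \<in> (\<lambda>(x, xs). x # xs) ` ({-1, 1} \<times> cube n)"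
      by force
  qed
qed (auto simp: cube_def)

lemma bias_prob_Nil [simp]: "bias_prob p [] = 1"
  by (simp add: bias_prob_def)

lemma bias_prob_Cons [simp]:
  "bias_prob p (x # xs) = (1 + p * real_of_int x) / 2 * bias_prob p xs"
  by (simp add: bias_prob_def)

lemma bias_prob_replicate: "bias_prob p (replicate n c) = ((1 + p * real_of_int c) / 2) ^ n"
  by (induction n) auto

lemma bias_prob_nonneg:
  assumes "\<bar>p\<bar> \<le> 1" and "set xs \<subseteq> {-1, 1}"
  shows "0 \<le> bias_prob p xs"
  using assms(2) by (induction xs) (use assms(1) in auto)

lemma sum_bias_prob_cube: "(\<Sum>xs\<in>cube n. bias_prob p xs) = 1"
proof (induction n)
  case 0
  show ?case by (simp add: cube_0)
next
  case (Suc n)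
  have "inj_on (\<lambda>(x, xs). x # xs) ({-1, 1 :: int} \<times> cube n)"
    by (auto simp: inj_on_def)
  then have "(\<Sum>xs\<in>cube (Suc n). bias_prob p xs)
      = (\<Sum>x\<in>{-1, 1 :: int}. \<Sum>xs\<in>cube n. bias_prob p (x # xs))"
    by (simp add: cube_Suc sum.reindex case_prod_unfold sum.cartesian_product)
  also have "\<dots> = (\<Sum>x\<in>{-1, 1 :: int}. (1 + p * real_of_int x) / 2 * (\<Sum>xs\<in>cube n. bias_prob p xs))"
    by (simp add: sum_distrib_left)
  also have "\<dots> = 1"
    by (simp add: Suc field_simps)
  finally show ?case .
qed

lemma isCont_bias_prob: "isCont (\<lambda>p. bias_prob p xs) p"
  by (induction xs) (auto intro!: continuous_intros)

lemma has_real_derivative_bias_prob: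
  assumes "\<bar>p\<bar> < 1" and "set xs \<subseteq> {-1, 1}"
  shows "((\<lambda>p. bias_prob p xs) has_real_derivative
          bias_prob p xs * (\<Sum>xi\<leftarrow>xs. real_of_int xi - p) / (1 - p\<^sup>2)) (at p)"
  using assms(2)
proof (induction xs)
  case Nil
  show ?case by simp
next
  case (Cons x xs)
  let ?S = "\<Sum>xi\<leftarrow>xs. real_of_int xi - p"
  have x: "x = -1 \<or> x = 1" and "set xs \<subseteq> {-1, 1}"
    using Cons.prems by auto
  then have IH: "((\<lambda>p. bias_prob p xs) has_real_derivative bias_prob p xs * ?S / (1 - p\<^sup>2)) (at p)"
    using Cons.IH by blast
  have "((\<lambda>p. (1 + p * real_of_int x) / 2) has_real_derivative real_of_int x / 2) (at p)"
    by (auto intro!: derivative_eq_intros)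
  from DERIV_mult[OF this IH]
  have "((\<lambda>p. (1 + p * real_of_int x) / 2 * bias_prob p xs) has_real_derivative
      real_of_int x / 2 * bias_prob p xs
        + bias_prob p xs * ?S / (1 - p\<^sup>2) * ((1 + p * real_of_int x) / 2)) (at p)" .
  moreover have "1 - p\<^sup>2 \<noteq> 0"
    using assms(1) abs_square_less_1[of p] by linarith
  \<comment> \<open>since \<open>x (1 - p\<^sup>2) = (1 + p x) (x - p)\<close> for \<open>x = \<plusminus>1\<close>\<close>
  then have "real_of_int x / 2 * bias_prob p xs
        + bias_prob p xs * ?S / (1 - p\<^sup>2) * ((1 + p * real_of_int x) / 2)
      = (1 + p * real_of_int x) / 2 * bias_prob p xs * (real_of_int x - p + ?S) / (1 - p\<^sup>2)"
    using x by (auto simp: field_simps power2_eq_square)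
  ultimately show ?case
    by simp
qed

lemma isCont_inner_exp: "isCont (inner_exp n f) p"
  unfolding inner_exp_def sum_list_subtractf sum_list_triv
  by (intro continuous_intros isCont_bias_prob)

definition bias_mean :: "nat \<Rightarrow> (int list \<Rightarrow> real) \<Rightarrow> real \<Rightarrow> real" where
  "bias_mean n f p = (\<Sum>xs\<in>cube n. bias_prob p xs * f xs)"

lemma has_real_derivative_bias_mean:
  assumes "\<bar>p\<bar> < 1"
  shows "(bias_mean n f has_real_derivative inner_exp n f p / (1 - p\<^sup>2)) (at p)"
proof -
  have "(bias_mean n f has_real_derivative
      (\<Sum>xs\<in>cube n. bias_prob p xs * (\<Sum>xi\<leftarrow>xs. real_of_int xi - p) / (1 - p\<^sup>2) * f xs)) (at p)"
    unfolding bias_mean_def [abs_def]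
    by (intro DERIV_sum DERIV_cmult_right has_real_derivative_bias_prob assms)
      (simp add: cube_def)
  then show ?thesis
    by (simp add: inner_exp_def sum_divide_distrib ac_simps)
qed

lemma has_real_derivative_bias_mean_tanh:
  "((\<lambda>t. bias_mean n f (tanh (t / 2))) has_real_derivative inner_exp n f (tanh (t / 2)) / 2) (at t)"
proof -
  have "\<bar>tanh (t / 2)\<bar> < 1"
    using tanh_real_bounds[of "t / 2"] by auto
  then have "(tanh (t / 2))\<^sup>2 < 1"
    by (simp add: abs_square_less_1)
  moreover have "((\<lambda>t. tanh (t / 2)) has_real_derivative (1 - (tanh (t / 2))\<^sup>2) / 2) (at t)"
    by (auto intro!: derivative_eq_intros)
  ultimately show ?thesis
    using DERIV_chain2[OF has_real_derivative_bias_mean] \<open>\<bar>tanh (t / 2)\<bar> < 1\<close>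
    by fastforce
qed

lemma tanh_half_real: "tanh (t / 2) = (exp t - 1) / (exp t + 1 :: real)"
proof -
  have "tanh (t / 2) = (1 - exp (- t)) / (1 + exp (- t))"
    by (simp add: tanh_real_altdef)
  also have "\<dots> = (exp t * (1 - exp (- t))) / (exp t * (1 + exp (- t)))"
    by simp
  also have "\<dots> = (exp t - 1) / (exp t + 1)"
    by (simp add: algebra_simps flip: exp_add)
  finally show ?thesis .
qed

lemma integral_uniform_measure_Icc:
  fixes g G :: "real \<Rightarrow> real"
  assumes "a < b"
    and G: "\<And>t. a \<le> t \<Longrightarrow> t \<le> b \<Longrightarrow> (G has_real_derivative g t) (at t within {a..b})"
    and g: "g \<in> borel_measurable borel" "continuous_on {a..b} g"
  shows "(\<integral>t. g t \<partial>uniform_measure lborel {a..b}) = (G b - G a) / (b - a)"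
proof -
  have "uniform_measure lborel {a..b} = density lborel (\<lambda>t. ennreal (indicator {a..b} t / (b - a)))"
    unfolding uniform_measure_def using \<open>a < b\<close>
    by (intro arg_cong[where f = "density lborel"] ext)
      (simp add: indicator_def divide_ennreal[of 1 "b - a", simplified])
  then have "(\<integral>t. g t \<partial>uniform_measure lborel {a..b})
      = (\<integral>t. indicator {a..b} t * g t \<partial>lborel) / (b - a)"
    using \<open>a < b\<close> g(1) by (simp add: integral_density)
  also have "\<dots> = (G b - G a) / (b - a)"
    using integral_FTC_atLeastAtMost[of a b G g] \<open>a < b\<close> G g(2)
    by (simp add: has_real_derivative_iff_has_vector_derivative)
  finally show ?thesis .
qed

lemma integral_inner_exp_tanh_uniform:
  assumes "L > 0"
  shows "(\<integral>p. inner_exp n f p \<partial>distr (uniform_measure lborel {-L..L}) borel (\<lambda>t. tanh (t / 2)))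
    = (bias_mean n f (tanh (L / 2)) - bias_mean n f (- tanh (L / 2))) / L"
proof -
  let ?h = "\<lambda>t :: real. tanh (t / 2)"
  have "?h \<in> borel_measurable borel"
    by (intro borel_measurable_continuous_onI continuous_intros) simp_all
  then have h_meas: "?h \<in> borel_measurable (uniform_measure lborel {-L..L})"
    by (simp cong: measurable_cong_sets)
  have inner_meas: "inner_exp n f \<in> borel_measurable borel"
    by (intro borel_measurable_continuous_onI continuous_at_imp_continuous_on ballI isCont_inner_exp)
  have "isCont (\<lambda>t. inner_exp n f (?h t)) t" for t
    by (intro isCont_o2[OF _ isCont_inner_exp] continuous_intros) simp_all
  then have g_cont: "continuous_on UNIV (\<lambda>t. inner_exp n f (?h t))"
    by (simp add: continuous_at_imp_continuous_on)
  have G: "((\<lambda>t. 2 * bias_mean n f (?h t)) has_real_derivative inner_exp n f (?h t))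
      (at t within {-L..L})" for t
    using DERIV_cmult[OF has_real_derivative_bias_mean_tanh, of 2 n f t]
    by (simp add: has_field_derivative_at_within)
  have "(\<integral>p. inner_exp n f p \<partial>distr (uniform_measure lborel {-L..L}) borel ?h)
      = (\<integral>t. inner_exp n f (?h t) \<partial>uniform_measure lborel {-L..L})"
    by (rule integral_distr[OF h_meas inner_meas])
  also have "\<dots> = (2 * bias_mean n f (?h L) - 2 * bias_mean n f (?h (- L))) / (L - - L)"
    using \<open>L > 0\<close> G g_cont
    by (intro integral_uniform_measure_Icc)
      (auto intro: borel_measurable_continuous_onI continuous_on_subset)
  also have "\<dots> = (bias_mean n f (tanh (L / 2)) - bias_mean n f (- tanh (L / 2))) / L"
    by (simp add: field_split_simps)
  finally show ?thesis .
qed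

lemma bias_mean_ge:
  assumes "\<bar>p\<bar> \<le> 1" and "\<forall>xs\<in>cube n. -1 \<le> f xs" and "w \<in> cube n" and "f w = 1"
  shows "2 * bias_prob p w - 1 \<le> bias_mean n f p"
proof -
  have nonneg: "0 \<le> bias_prob p xs" if "xs \<in> cube n" for xs
    using bias_prob_nonneg[OF assms(1)] that by (simp add: cube_def)
  have "2 * bias_prob p w - 1 = bias_prob p w - (\<Sum>xs\<in>cube n - {w}. bias_prob p xs)"
    using sum.remove[OF finite_cube assms(3), of "bias_prob p"] by (simp add: sum_bias_prob_cube)
  also have "\<dots> \<le> bias_prob p w + (\<Sum>xs\<in>cube n - {w}. bias_prob p xs * f xs)"
  proof -
    have "- bias_prob p xs \<le> bias_prob p xs * f xs" if "xs \<in> cube n" for xs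
      using mult_left_mono[of "-1" "f xs" "bias_prob p xs"] nonneg assms(2) that by simp
    then have "(\<Sum>xs\<in>cube n - {w}. - bias_prob p xs) \<le> (\<Sum>xs\<in>cube n - {w}. bias_prob p xs * f xs)"
      by (intro sum_mono) auto
    then show ?thesis
      by (simp add: sum_negf)
  qed
  also have "\<dots> = bias_mean n f p"
    using sum.remove[OF finite_cube assms(3), of "\<lambda>xs. bias_prob p xs * f xs"] assms(4)
    by (simp add: bias_mean_def)
  finally show ?thesis .
qed

lemma bias_mean_le:
  assumes "\<bar>p\<bar> \<le> 1" and "\<forall>xs\<in>cube n. f xs \<le> 1" and "w \<in> cube n" and "f w = -1"
  shows "bias_mean n f p \<le> 1 - 2 * bias_prob p w"
  using bias_mean_ge[of p n "\<lambda>xs. - f xs" w] assms by (simp add: bias_mean_def sum_negf)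

lemma one_minus_inverse_pow_ge: "4 / 5 \<le> (1 - 1 / (5 * real n + 1)) ^ n"
proof -
  have "4 / 5 \<le> 1 + real n * (- 1 / (5 * real n + 1))"
    by (simp add: field_simps)
  also have "\<dots> \<le> (1 + (- 1 / (5 * real n + 1))) ^ n"
    by (rule Bernoulli_inequality) (simp add: field_simps)
  finally show ?thesis
    by simp
qed

theorem lemma4p2:
  fixes n :: nat and f :: "int list \<Rightarrow> real"
  assumes "n \<ge> 1"
    and "\<forall>xs\<in>cube n. -1 \<le> f xs \<and> f xs \<le> 1"
    and "f (replicate n 1) = 1"
    and "f (replicate n (-1)) = -1"
  shows "(\<integral>p. inner_exp n f p \<partial>rho n) \<ge> 1 / ln (5 * real n)"
proof -
  define L where "L = ln (5 * real n)"
  define q where "q = tanh (L / 2)"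
  have "L > 0" and "exp L = 5 * real n"
    using assms(1) by (simp_all add: L_def)
  then have "(1 + q) / 2 = 1 - 1 / (5 * real n + 1)"
    by (simp add: q_def tanh_half_real field_simps)
  then have "4 / 5 \<le> ((1 + q) / 2) ^ n"
    using one_minus_inverse_pow_ge[of n] by (simp only:)
  then have mass: "4 / 5 \<le> bias_prob q (replicate n 1)" "4 / 5 \<le> bias_prob (- q) (replicate n (-1))"
    by (simp_all add: bias_prob_replicate)
  have "\<bar>q\<bar> \<le> 1"
    using tanh_real_bounds[of "L / 2"] unfolding q_def abs_le_iff by simp
  moreover have "replicate n 1 \<in> cube n" "replicate n (-1) \<in> cube n"
    by (auto simp: cube_def)
  ultimately have "3 / 5 \<le> bias_mean n f q" "bias_mean n f (- q) \<le> - 3 / 5"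
    using bias_mean_ge[of q n f "replicate n 1"] bias_mean_le[of "- q" n f "replicate n (-1)"]
      mass assms(2-4) by auto
  moreover have "rho n = distr (uniform_measure lborel {-L..L}) borel (\<lambda>t. tanh (t / 2))"
    by (simp add: rho_def L_def tanh_half_real)
  ultimately show ?thesis
    using integral_inner_exp_tanh_uniform[OF \<open>L > 0\<close>, of n f] \<open>L > 0\<close>
    by (simp add: q_def L_def[symmetric] divide_right_mono)
qed

end
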